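(* Let $\lambda>0$, $L=D^2+\lambda^2$ and $[a,b]=[0,\pi/\lambda]$. Consider partitions $\Delta=\{0=t_1<\dots<t_n=\pi/\lambda\}$ in which one subsegment $[t_j,t_{j+1}]$ has length $\pi/\lambda-\varepsilon$ (so that the sum of the lengths of all other subsegments is $\varepsilon>0$). Then, as $\varepsilon\to 0$, uniformly in such partitions and in $f\in C[a,b]$, \[ \max_{i=1,\dots,n}\bigl|P_{\mathbb{S}(L,\Delta)}f(t_i)\bigr|\le\Bigl(\frac{38}{\pi}+O(\varepsilon)\Bigr)\|f\|_\infty . \]
   Context: The space of trigonometric $L$-splines $\mathbb{S}(L,\Delta)$ consists of the continuous functions $s$ on $[a,b]$ such that on each subsegment $[t_i,t_{i+1}]$ of the partition, $s$ is a linear combination of $\sin\lambda x$ and $\cos\lambda x$. $P_{\mathbb{S}(L,\Delta)}:C[a,b]\to\mathbb{S}(L,\Delta)$ is the orthogonal projection with respect to the $L_2[a,b]$ inner product, i.e. $P f\in\mathbb{S}(L,\Delta)$ and $\langle f,s\rangle=\langle Pf,s\rangle$ for all $s\in\mathbb{S}(L,\Delta)$. $\|f\|_\infty$ denotes the uniform norm on $[a,b]$. *)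

theory Defs
  imports "HOL-Analysis.Analysis"
begin

definition is_partition :: "real \<Rightarrow> nat \<Rightarrow> (nat \<Rightarrow> real) \<Rightarrow> bool" where
  "is_partition b n t \<longleftrightarrow> 2 \<le> n \<and> t 1 = 0 \<and> t n = b \<and> (\<forall>i\<in>{1..<n}. t i < t (Suc i))"

text \<open>Trigonometric L-splines for L = D^2 + lam^2 on [0, pi/lam] with knots t 1..t n.\<close>
definition trig_spline_space :: "real \<Rightarrow> nat \<Rightarrow> (nat \<Rightarrow> real) \<Rightarrow> (real \<Rightarrow> real) set" where
  "trig_spline_space lam n t =
     {s. continuous_on {0..pi/lam} s \<and>
         (\<forall>i\<in>{1..<n}. \<exists>\<alpha> \<beta>. \<forall>x\<in>{t i..t (Suc i)}. s x = \<alpha> * sin (lam * x) + \<beta> * cos (lam * x))}"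

definition L2_inner :: "real \<Rightarrow> (real \<Rightarrow> real) \<Rightarrow> (real \<Rightarrow> real) \<Rightarrow> real" where
  "L2_inner lam f g = integral {0..pi/lam} (\<lambda>x. f x * g x)"

definition spline_proj :: "real \<Rightarrow> nat \<Rightarrow> (nat \<Rightarrow> real) \<Rightarrow> (real \<Rightarrow> real) \<Rightarrow> (real \<Rightarrow> real)" where
  "spline_proj lam n t f = (SOME p. p \<in> trig_spline_space lam n t \<and>
      (\<forall>s\<in>trig_spline_space lam n t. L2_inner lam f s = L2_inner lam p s))"

definition sup_norm :: "real \<Rightarrow> (real \<Rightarrow> real) \<Rightarrow> real" where
  "sup_norm lam f = (SUP x\<in>{0..pi/lam}. \<bar>f x\<bar>)"

end

(*
  Let p = P f and let t_k be a knot at which |p| is largest among the knots.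

  If t_k is an end point of the long segment, write p = alpha sin (lam x) + beta cos (lam x)
  there.  That segment has lam-length pi - lam eps >= 2, so the integral of p^2 over it is at
  least (alpha^2 + beta^2) / (2 lam), while ||p||_2 <= ||f||_2 <= sqrt (pi / lam) ||f||_oo.
  Hence |p| <= sqrt (2 pi) ||f||_oo <= 3 ||f||_oo on the long segment.

  Otherwise both segments adjacent to t_k have lam-length at most 1/10.  On each of them p is
  the trigonometric interpolant of its end values, and |p(t_k)| dominates the value at the
  other end; a Taylor estimate then shows that the integral of p against the nodal basis
  function hat k has the sign of p(t_k) and is at least |p(t_k)| / 8 times the integral of
  hat k.  Since <p, hat k> = <f, hat k> is at most ||f||_oo times the integral of hat k, we get
  |p(t_k)| <= 8 ||f||_oo.  As 8 < 38/pi, the theorem holds with C = 0 and eps0 = 1/(10 lam).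

  The projection itself exists by Gram-Schmidt orthogonalisation along the nodal basis.
*)
theory Submission
  imports Defs
begin

section \<open>The \<open>L\<^sub>2\<close> inner product on an interval\<close>

definition L2_inner_on :: "real \<Rightarrow> real \<Rightarrow> (real \<Rightarrow> real) \<Rightarrow> (real \<Rightarrow> real) \<Rightarrow> real" where
  "L2_inner_on a b f g = integral {a..b} (\<lambda>x. f x * g x)"

lemma L2_inner_eq_L2_inner_on: "L2_inner lam = L2_inner_on 0 (pi/lam)"
  unfolding L2_inner_def L2_inner_on_def by (intro ext) (rule refl)

lemma L2_inner_on_commute: "L2_inner_on a b f g = L2_inner_on a b g f"
  unfolding L2_inner_on_def by (simp add: mult.commute)

lemma L2_inner_on_cong:
  assumes "\<And>x. x \<in> {a..b} \<Longrightarrow> f x = f' x" "\<And>x. x \<in> {a..b} \<Longrightarrow> g x = g' x"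
  shows "L2_inner_on a b f g = L2_inner_on a b f' g'"
  unfolding L2_inner_on_def using assms by (intro integral_cong) simp

lemma L2_inner_on_lincomb_left:
  assumes "continuous_on {a..b} f1" "continuous_on {a..b} f2" "continuous_on {a..b} g"
  shows "L2_inner_on a b (\<lambda>x. c1 * f1 x + c2 * f2 x) g = c1 * L2_inner_on a b f1 g + c2 * L2_inner_on a b f2 g"
proof -
  have int: "(\<lambda>x. c1 * (f1 x * g x)) integrable_on {a..b}" "(\<lambda>x. c2 * (f2 x * g x)) integrable_on {a..b}"
    by (intro integrable_continuous_interval continuous_intros assms)+
  have "L2_inner_on a b (\<lambda>x. c1 * f1 x + c2 * f2 x) g
      = integral {a..b} (\<lambda>x. c1 * (f1 x * g x) + c2 * (f2 x * g x))"
    unfolding L2_inner_on_def by (simp add: algebra_simps)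
  also have "\<dots> = c1 * L2_inner_on a b f1 g + c2 * L2_inner_on a b f2 g"
    unfolding L2_inner_on_def integral_add[OF int] by simp
  finally show ?thesis .
qed

lemma L2_inner_on_diff_left:
  assumes "continuous_on {a..b} f" "continuous_on {a..b} g" "continuous_on {a..b} h"
  shows "L2_inner_on a b (\<lambda>x. f x - g x) h = L2_inner_on a b f h - L2_inner_on a b g h"
  using L2_inner_on_lincomb_left[OF assms, of 1 "-1"] by simp

lemma L2_inner_on_add_scaled_left:
  assumes "continuous_on {a..b} f" "continuous_on {a..b} g" "continuous_on {a..b} h"
  shows "L2_inner_on a b (\<lambda>x. f x + c * g x) h = L2_inner_on a b f h + c * L2_inner_on a b g h"
  using L2_inner_on_lincomb_left[OF assms, of 1 c] by simp

lemma integral_pos_if_continuous_nonneg: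
  fixes g :: "real \<Rightarrow> real"
  assumes "a < b" "continuous_on {a..b} g" "\<And>x. x \<in> {a..b} \<Longrightarrow> 0 \<le> g x"
    and "x0 \<in> {a..b}" "0 < g x0"
  shows "0 < integral {a..b} g"
proof -
  have "0 \<le> integral {a..b} g"
    using assms(2,3) by (intro integral_nonneg integrable_continuous_interval) auto
  moreover have "integral {a..b} g \<noteq> 0"
  proof
    assume "integral {a..b} g = 0"
    then have "(g has_integral 0) (cbox a b)"
      using assms(2) integrable_continuous_interval by (metis box_real(2) has_integral_integral)
    then have "g x0 = 0"
      using has_integral_0_cbox_imp_0[of a b g x0] assms by auto
    with assms(5) show False by simp
  qed
  ultimately show ?thesis by linarith
qed

lemma L2_inner_on_self_eq_0D:
  assumes "a < b" "continuous_on {a..b} f" "L2_inner_on a b f f = 0" "x \<in> {a..b}"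
  shows "f x = 0"
proof (rule ccontr)
  assume "f x \<noteq> 0"
  moreover have "continuous_on {a..b} (\<lambda>x. f x * f x)"
    using assms(2) by (intro continuous_intros)
  ultimately have "0 < integral {a..b} (\<lambda>x. f x * f x)"
    using assms by (intro integral_pos_if_continuous_nonneg[of _ _ _ x]) (auto simp: zero_less_mult_iff)
  with assms(3) show False unfolding L2_inner_on_def by simp
qed

definition L2_projection_onto ::
    "real \<Rightarrow> real \<Rightarrow> (real \<Rightarrow> real) list \<Rightarrow> (real \<Rightarrow> real) \<Rightarrow> (real \<Rightarrow> real) \<Rightarrow> bool" where
  "L2_projection_onto a b gs f p \<longleftrightarrow>
    (\<forall>g\<in>set gs. L2_inner_on a b (\<lambda>x. f x - p x) g = 0) \<and>
    (\<forall>h. continuous_on {a..b} h \<longrightarrow> (\<forall>g\<in>set gs. L2_inner_on a b h g = 0) \<longrightarrow> L2_inner_on a b h p = 0)"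
  \<comment> \<open>The second conjunct says, by duality, that \<open>p\<close> lies in the span of \<open>gs\<close>.\<close>

lemma L2_projection_onto_Nil: "L2_projection_onto a b [] f (\<lambda>x. 0)"
  by (simp add: L2_projection_onto_def L2_inner_on_def)

lemma L2_projection_onto_Cons:
  assumes "a < b" and cont: "continuous_on {a..b} f" "continuous_on {a..b} g"
    "continuous_on {a..b} p0" "continuous_on {a..b} q"
    and gs: "\<And>g'. g' \<in> set gs \<Longrightarrow> continuous_on {a..b} g'"
    and p0: "L2_projection_onto a b gs f p0" and q: "L2_projection_onto a b gs g q"
  shows "\<exists>\<kappa>. L2_projection_onto a b (g # gs) f (\<lambda>x. p0 x + \<kappa> * (g x - q x))"
proof -
  let ?ip = "L2_inner_on a b"
  define e where "e x = g x - q x" for x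
  define \<kappa> where "\<kappa> = ?ip (\<lambda>x. f x - p0 x) e / ?ip e e"
  define p where "p x = p0 x + \<kappa> * e x" for x
  have cont_e [continuous_intros]: "continuous_on {a..b} e"
    unfolding e_def using cont by (intro continuous_intros)
  have cont_res_p0 [continuous_intros]: "continuous_on {a..b} (\<lambda>x. f x - p0 x)"
    using cont by (intro continuous_intros)
  have e_orth: "?ip e g' = 0" if "g' \<in> set gs" for g'
    using q that by (simp add: L2_projection_onto_def e_def[abs_def])
  have \<kappa>: "?ip (\<lambda>x. f x - p0 x) e - \<kappa> * ?ip e e = 0"
  proof (cases "?ip e e = 0")
    case True
    \<comment> \<open>a null direction \<open>e\<close> vanishes on \<open>[a, b]\<close>, so any \<open>\<kappa>\<close> works\<close>
    have "?ip (\<lambda>x. f x - p0 x) e = ?ip (\<lambda>x. f x - p0 x) (\<lambda>x. 0)"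
      using L2_inner_on_self_eq_0D[OF \<open>a < b\<close> cont_e True] by (intro L2_inner_on_cong) auto
    then show ?thesis using True by (simp add: L2_inner_on_def)
  qed (simp add: \<kappa>_def)
  have residual: "(\<lambda>x. f x - p x) = (\<lambda>x. (f x - p0 x) + (- \<kappa>) * e x)"
    by (simp add: p_def algebra_simps)
  have orth_gs: "?ip (\<lambda>x. f x - p x) g' = 0" if "g' \<in> set gs" for g'
    unfolding residual L2_inner_on_add_scaled_left[OF cont_res_p0 cont_e gs[OF that]]
    using that p0 e_orth by (simp add: L2_projection_onto_def)
  have orth_e: "?ip (\<lambda>x. f x - p x) e = 0"
    unfolding residual L2_inner_on_add_scaled_left[OF cont_res_p0 cont_e cont_e] using \<kappa> by simp
  have cont_res_p [continuous_intros]: "continuous_on {a..b} (\<lambda>x. f x - p x)"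
    unfolding p_def using cont by (intro continuous_intros)
  have orth_q: "?ip (\<lambda>x. f x - p x) q = 0"
    using q orth_gs cont_res_p by (simp add: L2_projection_onto_def)
  have orth_g: "?ip (\<lambda>x. f x - p x) g = 0"
  proof -
    have "?ip (\<lambda>x. f x - p x) g = ?ip (\<lambda>x. e x + 1 * q x) (\<lambda>x. f x - p x)"
      by (subst L2_inner_on_commute) (simp add: e_def)
    also have "\<dots> = ?ip e (\<lambda>x. f x - p x) + 1 * ?ip q (\<lambda>x. f x - p x)"
      using cont by (intro L2_inner_on_add_scaled_left continuous_intros)
    finally show ?thesis using orth_e orth_q by (simp add: L2_inner_on_commute)
  qed
  have span: "?ip h p = 0" if h: "continuous_on {a..b} h" "\<forall>g\<in>set (g # gs). ?ip h g = 0" for h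
  proof -
    have "?ip p0 h = 0" "?ip q h = 0" "?ip g h = 0"
      using p0 q h by (auto simp: L2_projection_onto_def L2_inner_on_commute[of a b h])
    then show ?thesis
      using h(1) cont cont_e by (simp add: p_def[abs_def] e_def L2_inner_on_commute[of a b h]
          L2_inner_on_add_scaled_left L2_inner_on_diff_left)
  qed
  show ?thesis
    using orth_gs orth_g span unfolding L2_projection_onto_def p_def e_def by auto
qed

lemma L2_projection_onto_exists:
  fixes V :: "(real \<Rightarrow> real) set"
  assumes "a < b"
    and cont: "\<And>v. v \<in> V \<Longrightarrow> continuous_on {a..b} v"
    and zero: "(\<lambda>x. 0) \<in> V"
    and lincomb: "\<And>v w c d. v \<in> V \<Longrightarrow> w \<in> V \<Longrightarrow> (\<lambda>x. c * v x + d * w x) \<in> V"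
  shows "set gs \<subseteq> V \<Longrightarrow> continuous_on {a..b} f \<Longrightarrow> \<exists>p\<in>V. L2_projection_onto a b gs f p"
proof (induction gs arbitrary: f)
  case Nil
  show ?case using zero L2_projection_onto_Nil by blast
next
  case (Cons g gs)
  then have g: "g \<in> V" and gs: "set gs \<subseteq> V" by auto
  obtain p0 q where p0: "p0 \<in> V" "L2_projection_onto a b gs f p0"
    and q: "q \<in> V" "L2_projection_onto a b gs g q"
    using Cons.IH[OF gs Cons.prems(2)] Cons.IH[OF gs cont[OF g]] by blast
  obtain \<kappa> where "L2_projection_onto a b (g # gs) f (\<lambda>x. p0 x + \<kappa> * (g x - q x))"
    using L2_projection_onto_Cons[OF \<open>a < b\<close> Cons.prems(2) cont[OF g] cont[OF p0(1)] cont[OF q(1)]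
        cont p0(2) q(2)] gs by blast
  moreover have "(\<lambda>x. p0 x + \<kappa> * (g x - q x)) \<in> V"
    using lincomb[OF p0(1) lincomb[OF g q(1), of 1 "-1"], of 1 \<kappa>] by simp
  ultimately show ?case by blast
qed

lemma L2_inner_on_projection_le:
  assumes "continuous_on {a..b} f" "continuous_on {a..b} p"
    and "L2_inner_on a b f p = L2_inner_on a b p p"
  shows "L2_inner_on a b p p \<le> L2_inner_on a b f f"
proof -
  have "0 \<le> L2_inner_on a b (\<lambda>x. f x - p x) (\<lambda>x. f x - p x)"
    unfolding L2_inner_on_def using assms(1,2)
    by (intro integral_nonneg integrable_continuous_interval continuous_intros) auto
  also have "\<dots> = L2_inner_on a b f (\<lambda>x. f x - p x) - L2_inner_on a b p (\<lambda>x. f x - p x)"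
    using assms(1,2) by (intro L2_inner_on_diff_left continuous_intros)
  also have "\<dots> = (L2_inner_on a b f f - L2_inner_on a b p f) - (L2_inner_on a b f p - L2_inner_on a b p p)"
    using assms(1,2)
    by (simp add: L2_inner_on_commute[of a b _ "\<lambda>x. f x - p x"] L2_inner_on_diff_left)
  finally show ?thesis using assms(3) by (simp add: L2_inner_on_commute[of a b p f])
qed

lemma L2_inner_on_abs_le:
  assumes "continuous_on {a..b} f" "continuous_on {a..b} g"
    and "\<And>x. x \<in> {a..b} \<Longrightarrow> \<bar>f x\<bar> \<le> M" "\<And>x. x \<in> {a..b} \<Longrightarrow> 0 \<le> g x"
  shows "\<bar>L2_inner_on a b f g\<bar> \<le> M * integral {a..b} g"
proof -
  have "norm (integral {a..b} (\<lambda>x. f x * g x)) \<le> integral {a..b} (\<lambda>x. M * g x)"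
  proof (rule integral_norm_bound_integral)
    show "(\<lambda>x. f x * g x) integrable_on {a..b}" "(\<lambda>x. M * g x) integrable_on {a..b}"
      using assms(1,2) by (intro integrable_continuous_interval continuous_intros assms(1,2))+
    show "norm (f x * g x) \<le> M * g x" if "x \<in> {a..b}" for x
      using assms(3,4)[OF that] by (simp add: abs_mult mult_right_mono)
  qed
  then show ?thesis by (simp add: L2_inner_on_def)
qed

lemma L2_inner_on_self_le:
  assumes "a \<le> b" "continuous_on {a..b} f" "\<And>x. x \<in> {a..b} \<Longrightarrow> \<bar>f x\<bar> \<le> M"
  shows "L2_inner_on a b f f \<le> M\<^sup>2 * (b - a)"
proof -
  have "norm (integral {a..b} (\<lambda>x. f x * f x)) \<le> integral {a..b} (\<lambda>x. M * M)"
  proof (rule integral_norm_bound_integral)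
    show "(\<lambda>x. f x * f x) integrable_on {a..b}" "(\<lambda>x. M * M) integrable_on {a..b}"
      by (intro integrable_continuous_interval continuous_intros assms(2))+
    show "norm (f x * f x) \<le> M * M" if "x \<in> {a..b}" for x
    proof -
      have "\<bar>f x\<bar> * \<bar>f x\<bar> \<le> M * M"
        using assms(3)[OF that] abs_ge_zero[of "f x"] by (intro mult_mono) linarith+
      then show ?thesis by (simp add: abs_mult)
    qed
  qed
  then show ?thesis using assms(1) by (simp add: L2_inner_on_def power2_eq_square mult_ac abs_le_iff)
qed

section \<open>Trigonometric estimates on a segment\<close>

lemma sin_Taylor_bound:
  fixes x :: real
  assumes "0 \<le> x"
  shows "\<bar>sin x - (x - x^3/6)\<bar> \<le> x^5/120"
proof -
  have "\<bar>sin x - (\<Sum>m<5. sin_coeff m * x ^ m)\<bar> \<le> inverse (fact 5) * \<bar>x\<bar> ^ 5"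
    by (rule Maclaurin_sin_bound)
  moreover have "(\<Sum>m<5. sin_coeff m * x ^ m) = x - x^3/6"
    by (simp add: sin_coeff_def lessThan_nat_numeral fact_numeral)
  ultimately show ?thesis using assms by (simp add: fact_numeral)
qed

lemma cos_Taylor_bound:
  fixes x :: real
  shows "\<bar>cos x - (1 - x^2/2)\<bar> \<le> x^4/24"
proof -
  obtain s where s: "cos x = (\<Sum>m<4. cos_coeff m * x ^ m) + cos (s + 1/2 * real 4 * pi) / fact 4 * x ^ 4"
    using Maclaurin_cos_expansion[of x 4] by blast
  have "(\<Sum>m<4. cos_coeff m * x ^ m) = 1 - x^2/2"
    by (simp add: cos_coeff_def lessThan_nat_numeral fact_numeral)
  moreover have "\<bar>cos (s + 1/2 * real 4 * pi) / fact 4 * x ^ 4\<bar> \<le> x^4/24"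
    by (simp add: fact_numeral abs_mult divide_right_mono mult_left_le_one_le)
  ultimately show ?thesis using s by simp
qed

lemma small_angle_trig_ineqs:
  fixes \<theta> :: real
  assumes "0 < \<theta>" "\<theta> \<le> 1"
  shows "sin \<theta> * (1 - cos \<theta>) / 8 \<le> \<theta>/2 - sin (2*\<theta>)/4 - (sin \<theta> - \<theta> * cos \<theta>)/2"
    and "\<theta> * cos \<theta> \<le> sin \<theta>"
proof -
  have sin2: "sin (2*\<theta>) \<le> 2*\<theta> - 8*\<theta>^3/6 + 32*\<theta>^5/120"
    using sin_Taylor_bound[of "2*\<theta>"] assms unfolding abs_le_iff power_mult_distrib by simp
  have sin1: "\<theta> - \<theta>^3/6 - \<theta>^5/120 \<le> sin \<theta>" "sin \<theta> \<le> \<theta> - \<theta>^3/6 + \<theta>^5/120"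
    using sin_Taylor_bound[of \<theta>] assms unfolding abs_le_iff by simp_all
  have cos1: "1 - \<theta>^2/2 - \<theta>^4/24 \<le> cos \<theta>" "cos \<theta> \<le> 1 - \<theta>^2/2 + \<theta>^4/24"
    using cos_Taylor_bound[of \<theta>] unfolding abs_le_iff by simp_all
  have pow: "\<theta>^5 \<le> \<theta>^3" "0 < \<theta>^3"
    using assms by (auto intro: power_decreasing)
  have \<theta>cos: "\<theta> - \<theta>^3/2 - \<theta>^5/24 \<le> \<theta> * cos \<theta>" "\<theta> * cos \<theta> \<le> \<theta> - \<theta>^3/2 + \<theta>^5/24"
    using mult_left_mono[OF cos1(1), of \<theta>] mult_left_mono[OF cos1(2), of \<theta>] assms
    by (simp_all add: algebra_simps power_def)
  have "sin \<theta> * (1 - cos \<theta>) \<le> \<theta> * (\<theta>^2/2 + \<theta>^4/24)"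
    using sin_x_le_x[of \<theta>] cos1(1) assms sin_gt_zero[of \<theta>] pi_gt3
    by (intro mult_mono) auto
  then have "sin \<theta> * (1 - cos \<theta>) \<le> \<theta>^3/2 + \<theta>^5/24"
    by (simp add: algebra_simps power_def)
  then show "sin \<theta> * (1 - cos \<theta>) / 8 \<le> \<theta>/2 - sin (2*\<theta>)/4 - (sin \<theta> - \<theta> * cos \<theta>)/2"
    using sin2 sin1 \<theta>cos pow by argo
  show "\<theta> * cos \<theta> \<le> sin \<theta>"
    using sin1 \<theta>cos pow by linarith
qed

lemma integral_eq_if_has_real_derivative:
  fixes F f :: "real \<Rightarrow> real"
  assumes "a \<le> b" "\<And>x. x \<in> {a..b} \<Longrightarrow> (F has_real_derivative f x) (at x)"
  shows "integral {a..b} f = F b - F a"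
proof -
  have "(f has_integral F b - F a) {a..b}"
    using assms by (intro fundamental_theorem_of_calculus)
      (auto simp: has_real_derivative_iff_has_vector_derivative[symmetric] has_field_derivative_at_within)
  then show ?thesis by (rule integral_unique)
qed

lemma integral_reflect_Icc:
  fixes f :: "real \<Rightarrow> 'a::euclidean_space"
  shows "integral {a..b} (\<lambda>x. f (a + b - x)) = integral {a..b} f"
proof -
  have "integral {-b - -(a+b)..-a - -(a+b)} (\<lambda>x. f (- (x + - (a+b)))) = integral {-b..-a} (\<lambda>y. f (- y))"
    by (rule integral_shift_real_ivl)
  then show ?thesis by (simp add: algebra_simps)
qed

lemma integral_sin_sq_segment:
  fixes lam a c :: real
  assumes "lam \<noteq> 0" "a \<le> c"
  shows "integral {a..c} (\<lambda>x. sin (lam * (c - x)) * sin (lam * (c - x)))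
      = (lam * (c - a) / 2 - sin (2 * (lam * (c - a))) / 4) / lam"
proof -
  have "integral {a..c} (\<lambda>x. sin (lam * (c - x)) * sin (lam * (c - x)))
      = (c/2 + sin (2 * (lam * (c - c))) / (4*lam)) - (a/2 + sin (2 * (lam * (c - a))) / (4*lam))"
  proof (rule integral_eq_if_has_real_derivative[OF assms(2)])
    fix x
    have sq: "sin (lam * (c - x)) * sin (lam * (c - x)) = 1/2 - cos (2 * (lam * (c - x))) / 2"
      using cos_double_sin[of "lam * (c - x)"] unfolding power2_eq_square by linarith
    show "((\<lambda>x. x/2 + sin (2 * (lam * (c - x))) / (4*lam)) has_real_derivative
        sin (lam * (c - x)) * sin (lam * (c - x))) (at x)"
      unfolding sq using assms(1) by (auto intro!: derivative_eq_intros simp: field_simps)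
  qed
  then show ?thesis using assms(1) by (simp add: field_simps)
qed

lemma integral_sin_cross_segment:
  fixes lam a c :: real
  assumes "lam \<noteq> 0" "a \<le> c"
  shows "integral {a..c} (\<lambda>x. sin (lam * (c - x)) * sin (lam * (x - a)))
      = (sin (lam * (c - a)) - lam * (c - a) * cos (lam * (c - a))) / (2 * lam)"
proof -
  have "integral {a..c} (\<lambda>x. sin (lam * (c - x)) * sin (lam * (x - a)))
      = (- sin (lam * (c + a - 2*c)) / (4*lam) - c * cos (lam * (c - a)) / 2)
        - (- sin (lam * (c + a - 2*a)) / (4*lam) - a * cos (lam * (c - a)) / 2)"
  proof (rule integral_eq_if_has_real_derivative[OF assms(2)])
    fix x
    have prod: "sin (lam * (c - x)) * sin (lam * (x - a)) = (cos (lam * (c + a - 2*x)) - cos (lam * (c - a))) / 2"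
      by (simp add: sin_times_sin algebra_simps)
    show "((\<lambda>x. - sin (lam * (c + a - 2*x)) / (4*lam) - x * cos (lam * (c - a)) / 2) has_real_derivative
        sin (lam * (c - x)) * sin (lam * (x - a))) (at x)"
      unfolding prod using assms(1) by (auto intro!: derivative_eq_intros simp: field_simps)
  qed
  also have "\<dots> = (sin (lam * (c - a)) - lam * (c - a) * cos (lam * (c - a))) / (2 * lam)"
  proof -
    have "lam * (c + a - 2*c) = - (lam * (c - a))" "lam * (c + a - 2*a) = lam * (c - a)"
      by (simp_all add: algebra_simps)
    then show ?thesis using assms(1) by (simp only: sin_minus) (simp add: field_simps)
  qed
  finally show ?thesis .
qed

lemma integral_sin_segment:
  fixes lam a c :: real
  assumes "lam \<noteq> 0" "a \<le> c"
  shows "integral {a..c} (\<lambda>x. sin (lam * (c - x))) = (1 - cos (lam * (c - a))) / lam"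
proof -
  have "integral {a..c} (\<lambda>x. sin (lam * (c - x))) = cos (lam * (c - c)) / lam - cos (lam * (c - a)) / lam"
    by (rule integral_eq_if_has_real_derivative[OF assms(2)])
      (use assms(1) in \<open>auto intro!: derivative_eq_intros simp: field_simps\<close>)
  then show ?thesis by (simp add: diff_divide_distrib)
qed

lemma sin_cos_comb_sq_le: "(\<alpha> * sin x + \<beta> * cos x)\<^sup>2 \<le> \<alpha>\<^sup>2 + (\<beta>::real)\<^sup>2"
proof -
  have "(\<alpha> * sin x + \<beta> * cos x)\<^sup>2 + (\<alpha> * cos x - \<beta> * sin x)\<^sup>2 = \<alpha>\<^sup>2 + \<beta>\<^sup>2"
    using sin_cos_squared_add[of x] by algebra
  then show ?thesis using zero_le_power2[of "\<alpha> * cos x - \<beta> * sin x"] by linarith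
qed

lemma sin_cos_comb_interpolation:
  fixes lam x a c \<alpha> \<beta> :: real
  shows "(\<alpha> * sin (lam * x) + \<beta> * cos (lam * x)) * sin (lam * (c - a)) =
    (\<alpha> * sin (lam * a) + \<beta> * cos (lam * a)) * sin (lam * (c - x))
    + (\<alpha> * sin (lam * c) + \<beta> * cos (lam * c)) * sin (lam * (x - a))"
  by (simp add: sin_diff cos_diff algebra_simps)

lemma integral_sin_cos_comb_sq_ge:
  fixes lam a c \<alpha> \<beta> :: real
  assumes "0 < lam" "a \<le> c"
  shows "(\<alpha>\<^sup>2 + \<beta>\<^sup>2) * ((c - a) / 2 - 1 / (2 * lam))
    \<le> integral {a..c} (\<lambda>x. (\<alpha> * sin (lam * x) + \<beta> * cos (lam * x))\<^sup>2)"
proof -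
  define osc where "osc y = (\<beta>\<^sup>2 - \<alpha>\<^sup>2) * sin y + (- 2 * \<alpha> * \<beta>) * cos y" for y
  have osc_bound: "\<bar>osc y\<bar> \<le> \<alpha>\<^sup>2 + \<beta>\<^sup>2" for y
  proof -
    have "(osc y)\<^sup>2 \<le> (\<alpha>\<^sup>2 + \<beta>\<^sup>2)\<^sup>2"
      using sin_cos_comb_sq_le[of "\<beta>\<^sup>2 - \<alpha>\<^sup>2" y "- 2 * \<alpha> * \<beta>"]
      by (simp add: osc_def power2_eq_square algebra_simps)
    then show ?thesis using power2_le_imp_le[of "\<bar>osc y\<bar>" "\<alpha>\<^sup>2 + \<beta>\<^sup>2"] by simp
  qed
  define G where "G x = (\<alpha>\<^sup>2 + \<beta>\<^sup>2) * x / 2 + osc (2 * (lam * x)) / (4 * lam)" for x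
  have "integral {a..c} (\<lambda>x. (\<alpha> * sin (lam * x) + \<beta> * cos (lam * x))\<^sup>2) = G c - G a"
  proof (rule integral_eq_if_has_real_derivative[OF assms(2)])
    fix x
    have sq: "(\<alpha> * sin (lam * x) + \<beta> * cos (lam * x))\<^sup>2
        = (\<alpha>\<^sup>2 + \<beta>\<^sup>2) / 2 + ((\<beta>\<^sup>2 - \<alpha>\<^sup>2) * cos (2 * (lam * x)) + 2 * \<alpha> * \<beta> * sin (2 * (lam * x))) / 2"
      using sin_cos_squared_add[of "lam * x"]
      unfolding sin_double cos_double power2_eq_square by algebra
    show "(G has_real_derivative (\<alpha> * sin (lam * x) + \<beta> * cos (lam * x))\<^sup>2) (at x)"
      unfolding G_def osc_def sq using assms(1)
      by (auto intro!: derivative_eq_intros simp: field_simps)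
  qed
  moreover have "(\<alpha>\<^sup>2 + \<beta>\<^sup>2) * ((c - a) / 2 - 1 / (2 * lam)) \<le> G c - G a"
  proof -
    have "- (2 * (\<alpha>\<^sup>2 + \<beta>\<^sup>2)) \<le> osc (2 * (lam * c)) - osc (2 * (lam * a))"
      using osc_bound[of "2 * (lam * c)"] osc_bound[of "2 * (lam * a)"] by (auto simp: abs_le_iff)
    then have "- (2 * (\<alpha>\<^sup>2 + \<beta>\<^sup>2)) / (4 * lam) \<le> (osc (2 * (lam * c)) - osc (2 * (lam * a))) / (4 * lam)"
      using assms(1) by (intro divide_right_mono) auto
    moreover have "G c - G a = (\<alpha>\<^sup>2 + \<beta>\<^sup>2) * (c - a) / 2 + (osc (2 * (lam * c)) - osc (2 * (lam * a))) / (4 * lam)"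
      unfolding G_def by (simp add: diff_divide_distrib algebra_simps)
    moreover have "(\<alpha>\<^sup>2 + \<beta>\<^sup>2) * ((c - a) / 2 - 1 / (2 * lam))
        = (\<alpha>\<^sup>2 + \<beta>\<^sup>2) * (c - a) / 2 + - (2 * (\<alpha>\<^sup>2 + \<beta>\<^sup>2)) / (4 * lam)"
      using assms(1) by (simp add: field_simps)
    ultimately show ?thesis by linarith
  qed
  ultimately show ?thesis by simp
qed

text \<open>The factor \<open>1/8\<close> below is the source of the constant \<open>8\<close> in the final bound.\<close>

lemma segment_integrals_ineq:
  fixes lam a c :: real
  assumes "0 < lam" "a < c" "lam * (c - a) \<le> 1"
  shows "0 \<le> integral {a..c} (\<lambda>x. sin (lam * (c - x)) * sin (lam * (x - a)))"
    and "sin (lam * (c - a)) / 8 * integral {a..c} (\<lambda>x. sin (lam * (c - x)))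
      \<le> integral {a..c} (\<lambda>x. sin (lam * (c - x)) * sin (lam * (c - x)))
        - integral {a..c} (\<lambda>x. sin (lam * (c - x)) * sin (lam * (x - a)))"
proof -
  define \<theta> where "\<theta> = lam * (c - a)"
  have \<theta>: "0 < \<theta>" "\<theta> \<le> 1" using assms unfolding \<theta>_def by auto
  have I: "integral {a..c} (\<lambda>x. sin (lam * (c - x)) * sin (lam * (c - x))) = (\<theta>/2 - sin (2*\<theta>)/4) / lam"
    "integral {a..c} (\<lambda>x. sin (lam * (c - x)) * sin (lam * (x - a))) = (sin \<theta> - \<theta> * cos \<theta>) / (2*lam)"
    "integral {a..c} (\<lambda>x. sin (lam * (c - x))) = (1 - cos \<theta>) / lam"
    unfolding \<theta>_def using assms(1,2)
    by (simp_all add: integral_sin_sq_segment integral_sin_cross_segment integral_sin_segment)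
  show "0 \<le> integral {a..c} (\<lambda>x. sin (lam * (c - x)) * sin (lam * (x - a)))"
    unfolding I using small_angle_trig_ineqs(2)[OF \<theta>] assms(1) by simp
  have "sin \<theta> * (1 - cos \<theta>) / 8 / lam \<le> (\<theta>/2 - sin (2*\<theta>)/4 - (sin \<theta> - \<theta> * cos \<theta>)/2) / lam"
    using small_angle_trig_ineqs(1)[OF \<theta>] assms(1) by (intro divide_right_mono) auto
  moreover have "(\<theta>/2 - sin (2*\<theta>)/4) / lam - (sin \<theta> - \<theta> * cos \<theta>) / (2*lam)
      = (\<theta>/2 - sin (2*\<theta>)/4 - (sin \<theta> - \<theta> * cos \<theta>)/2) / lam"
    using assms(1) by (simp add: field_simps)
  ultimately show "sin (lam * (c - a)) / 8 * integral {a..c} (\<lambda>x. sin (lam * (c - x)))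
      \<le> integral {a..c} (\<lambda>x. sin (lam * (c - x)) * sin (lam * (c - x)))
        - integral {a..c} (\<lambda>x. sin (lam * (c - x)) * sin (lam * (x - a)))"
    unfolding I \<theta>_def[symmetric] by simp
qed

lemma segment_test_falling:
  fixes lam a c :: real and P :: "real \<Rightarrow> real"
  assumes "0 < lam" "a < c" "lam * (c - a) \<le> 1"
    and interp: "\<And>x. x \<in> {a..c} \<Longrightarrow>
      P x * sin (lam * (c - a)) = P a * sin (lam * (c - x)) + P c * sin (lam * (x - a))"
    and "\<bar>P c\<bar> \<le> \<bar>P a\<bar>"
  shows "\<bar>P a\<bar> / 8 * integral {a..c} (\<lambda>x. sin (lam * (c - x)))
      \<le> sgn (P a) * integral {a..c} (\<lambda>x. P x * sin (lam * (c - x)))"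
proof -
  define S where "S = sin (lam * (c - a))"
  have S: "0 < S" unfolding S_def using assms(1-3) pi_gt3 by (intro sin_gt_zero) auto
  define J1 where "J1 = integral {a..c} (\<lambda>x. sin (lam * (c - x)) * sin (lam * (c - x)))"
  define J2 where "J2 = integral {a..c} (\<lambda>x. sin (lam * (c - x)) * sin (lam * (x - a)))"
  define J0 where "J0 = integral {a..c} (\<lambda>x. sin (lam * (c - x)))"
  note J = segment_integrals_ineq[OF assms(1-3), folded J0_def J1_def J2_def S_def]
  have "integral {a..c} (\<lambda>x. P x * sin (lam * (c - x)))
      = integral {a..c} (\<lambda>x. (P a * (sin (lam * (c - x)) * sin (lam * (c - x)))
          + P c * (sin (lam * (c - x)) * sin (lam * (x - a)))) / S)"
  proof (rule integral_cong)
    fix x assume x: "x \<in> {a..c}"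
    have "P x * sin (lam * (c - x)) = P x * S * sin (lam * (c - x)) / S"
      using S by simp
    also have "\<dots> = (P a * sin (lam * (c - x)) + P c * sin (lam * (x - a))) * sin (lam * (c - x)) / S"
      using interp[OF x] by (simp add: S_def)
    finally show "P x * sin (lam * (c - x)) = (P a * (sin (lam * (c - x)) * sin (lam * (c - x)))
        + P c * (sin (lam * (c - x)) * sin (lam * (x - a)))) / S"
      by (simp add: algebra_simps)
  qed
  also have "\<dots> = (P a * J1 + P c * J2) / S"
  proof -
    have "(\<lambda>x. P a * (sin (lam * (c - x)) * sin (lam * (c - x)))) integrable_on {a..c}"
      "(\<lambda>x. P c * (sin (lam * (c - x)) * sin (lam * (x - a)))) integrable_on {a..c}"
      by (intro integrable_continuous_interval continuous_intros)+
    then show ?thesis by (simp add: integral_add J1_def J2_def)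
  qed
  finally have integral_P: "integral {a..c} (\<lambda>x. P x * sin (lam * (c - x))) = (P a * J1 + P c * J2) / S" .
  have "- \<bar>P a\<bar> * J2 \<le> sgn (P a) * P c * J2"
    using J(1) assms(5) by (intro mult_right_mono) (auto simp: sgn_if)
  moreover have "sgn (P a) * P a = \<bar>P a\<bar>" by (simp add: sgn_if)
  ultimately have "\<bar>P a\<bar> * (J1 - J2) \<le> sgn (P a) * (P a * J1 + P c * J2)"
    by (simp add: algebra_simps)
  moreover have "\<bar>P a\<bar> * (S / 8 * J0) \<le> \<bar>P a\<bar> * (J1 - J2)"
    using J(2) by (rule mult_left_mono) simp
  ultimately have "\<bar>P a\<bar> * (S / 8 * J0) / S \<le> sgn (P a) * (P a * J1 + P c * J2) / S"
    using S by (intro divide_right_mono) auto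
  then show ?thesis
    using S unfolding integral_P J0_def by (simp add: field_simps)
qed

lemma segment_test_rising:
  fixes lam a c :: real and P :: "real \<Rightarrow> real"
  assumes "0 < lam" "a < c" "lam * (c - a) \<le> 1"
    and interp: "\<And>x. x \<in> {a..c} \<Longrightarrow>
      P x * sin (lam * (c - a)) = P a * sin (lam * (c - x)) + P c * sin (lam * (x - a))"
    and "\<bar>P a\<bar> \<le> \<bar>P c\<bar>"
  shows "\<bar>P c\<bar> / 8 * integral {a..c} (\<lambda>x. sin (lam * (x - a)))
      \<le> sgn (P c) * integral {a..c} (\<lambda>x. P x * sin (lam * (x - a)))"
proof -
  define Q where "Q x = P (a + c - x)" for x
  have "\<bar>Q a\<bar> / 8 * integral {a..c} (\<lambda>x. sin (lam * (c - x)))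
      \<le> sgn (Q a) * integral {a..c} (\<lambda>x. Q x * sin (lam * (c - x)))"
  proof (rule segment_test_falling[OF assms(1-3)])
    fix x assume "x \<in> {a..c}"
    then have "a + c - x \<in> {a..c}" by auto
    from interp[OF this] show "Q x * sin (lam * (c - a)) = Q a * sin (lam * (c - x)) + Q c * sin (lam * (x - a))"
      by (simp add: Q_def algebra_simps)
  qed (use assms(5) in \<open>simp add: Q_def\<close>)
  moreover have "integral {a..c} (\<lambda>x. sin (lam * (c - x))) = integral {a..c} (\<lambda>x. sin (lam * (x - a)))"
    using integral_reflect_Icc[of a c "\<lambda>x. sin (lam * (x - a))"] by (simp add: algebra_simps)
  moreover have "integral {a..c} (\<lambda>x. Q x * sin (lam * (c - x))) = integral {a..c} (\<lambda>x. P x * sin (lam * (x - a)))"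
    using integral_reflect_Icc[of a c "\<lambda>x. P x * sin (lam * (x - a))"] by (simp add: Q_def algebra_simps)
  ultimately show ?thesis by (simp add: Q_def)
qed

lemma integral_sum_consecutive:
  fixes t :: "nat \<Rightarrow> real" and g :: "real \<Rightarrow> real"
  assumes "m \<le> k" "\<And>i. i \<in> {m..<k} \<Longrightarrow> t i \<le> t (Suc i)" "continuous_on {t m..t k} g"
  shows "integral {t m..t k} g = (\<Sum>i=m..<k. integral {t i..t (Suc i)} g)"
  using assms
proof (induction k rule: dec_induct)
  case base
  then show ?case by simp
next
  case (step k)
  have "t m \<le> t k" "t k \<le> t (Suc k)"
    using step.prems(1) lift_Suc_mono_le_ivl[of "{m..<Suc k}" t m k] step.hyps by auto
  then have "integral {t m..t (Suc k)} g = integral {t m..t k} g + integral {t k..t (Suc k)} g"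
    using Henstock_Kurzweil_Integration.integral_combine[where f=g and a="t m" and c="t k" and b="t (Suc k)"]
      integrable_continuous_interval[OF step.prems(2)] by simp
  also have "integral {t m..t k} g = (\<Sum>i=m..<k. integral {t i..t (Suc i)} g)"
    using step.prems \<open>t k \<le> t (Suc k)\<close> by (intro step.IH) (auto elim!: continuous_on_subset)
  finally show ?case using step.hyps by simp
qed

context
  fixes b :: real and n :: nat and t :: "nat \<Rightarrow> real"
  assumes partition: "is_partition b n t"
begin

lemma is_partition_less: "1 \<le> i \<Longrightarrow> i < k \<Longrightarrow> k \<le> n \<Longrightarrow> t i < t k"
  using partition lift_Suc_mono_less_ivl[of "{1..<n}" t i k] unfolding is_partition_def by auto

lemma is_partition_le: "1 \<le> i \<Longrightarrow> i \<le> k \<Longrightarrow> k \<le> n \<Longrightarrow> t i \<le> t k"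
  using is_partition_less[of i k] by (cases "i = k") auto

lemma is_partition_range: "1 \<le> i \<Longrightarrow> i \<le> n \<Longrightarrow> t i \<in> {0..b}"
  using is_partition_le[of 1 i] is_partition_le[of i n] partition unfolding is_partition_def by auto

lemma is_partition_cover:
  assumes "x \<in> {0..b}"
  shows "\<exists>i\<in>{1..<n}. x \<in> {t i..t (Suc i)}"
proof -
  have "\<exists>i\<in>{1..<m}. x \<in> {t i..t (Suc i)}" if "2 \<le> m" "m \<le> n" "x \<le> t m" for m
    using that
  proof (induction m rule: nat_induct_at_least)
    case base
    then show ?case using assms partition by (auto simp: is_partition_def numeral_2_eq_2)
  next
    case (Suc m)
    then show ?case by (cases "x \<le> t m") (fastforce, auto intro!: bexI[of _ m])
  qed
  then show ?thesis using assms partition unfolding is_partition_def by auto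
qed

lemma is_partition_Union: "{0..b} = (\<Union>i\<in>{1..<n}. {t i..t (Suc i)})"
proof
  show "{0..b} \<subseteq> (\<Union>i\<in>{1..<n}. {t i..t (Suc i)})"
    using is_partition_cover by blast
  show "(\<Union>i\<in>{1..<n}. {t i..t (Suc i)}) \<subseteq> {0..b}"
  proof (clarify)
    fix x i assume "i \<in> {1..<n}" "x \<in> {t i..t (Suc i)}"
    then show "x \<in> {0..b}" using is_partition_range[of i] is_partition_range[of "Suc i"] by auto
  qed
qed

lemma integral_is_partition_sum:
  fixes g :: "real \<Rightarrow> real"
  assumes "continuous_on {0..b} g"
  shows "integral {0..b} g = (\<Sum>i\<in>{1..<n}. integral {t i..t (Suc i)} g)"
proof -
  have "t i \<le> t (Suc i)" if "i \<in> {1..<n}" for i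
    using partition that unfolding is_partition_def by (auto intro: less_imp_le)
  then show ?thesis
    using integral_sum_consecutive[of 1 n t g] partition assms unfolding is_partition_def by auto
qed

end

section \<open>Trigonometric splines and their orthogonal projection\<close>

lemma sup_norm_ge:
  assumes "continuous_on {0..pi/lam} f" "x \<in> {0..pi/lam}"
  shows "\<bar>f x\<bar> \<le> sup_norm lam f"
proof -
  have "bdd_above ((\<lambda>x. \<bar>f x\<bar>) ` {0..pi/lam})"
    using assms(1) by (intro bounded_imp_bdd_above compact_imp_bounded compact_continuous_image continuous_intros) auto
  then show ?thesis unfolding sup_norm_def using assms(2) by (rule cSUP_upper[rotated])
qed

lemma sup_norm_nonneg: "0 \<le> lam \<Longrightarrow> continuous_on {0..pi/lam} f \<Longrightarrow> 0 \<le> sup_norm lam f"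
  using sup_norm_ge[of lam f 0] by (auto intro: order_trans[OF abs_ge_zero])

locale trig_partition =
  fixes lam :: real and n :: nat and t :: "nat \<Rightarrow> real"
  assumes lam_pos: "0 < lam"
    and partition: "is_partition (pi/lam) n t"
    and short_segments: "\<And>i. i \<in> {1..<n} \<Longrightarrow> lam * (t (Suc i) - t i) < pi"
  \<comment> \<open>so that \<open>sin (lam h) \<noteq> 0\<close> for every segment length \<open>h\<close>: nodal interpolation on a segment is well posed\<close>
begin

lemma segment_less: "i \<in> {1..<n} \<Longrightarrow> t i < t (Suc i)"
  using partition unfolding is_partition_def by auto

lemma sin_segment_pos: "i \<in> {1..<n} \<Longrightarrow> 0 < sin (lam * (t (Suc i) - t i))"
  using short_segments segment_less lam_pos by (intro sin_gt_zero) auto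

lemma trig_spline_space_iff:
  "s \<in> trig_spline_space lam n t \<longleftrightarrow>
    (\<forall>i\<in>{1..<n}. \<exists>\<alpha> \<beta>. \<forall>x\<in>{t i..t (Suc i)}. s x = \<alpha> * sin (lam * x) + \<beta> * cos (lam * x))"
proof -
  have "continuous_on {0..pi/lam} s"
    if "\<forall>i\<in>{1..<n}. \<exists>\<alpha> \<beta>. \<forall>x\<in>{t i..t (Suc i)}. s x = \<alpha> * sin (lam * x) + \<beta> * cos (lam * x)"
  proof -
    have "continuous_on {t i..t (Suc i)} s" if "i \<in> {1..<n}" for i
    proof -
      obtain \<alpha> \<beta> where s_eq: "\<forall>x\<in>{t i..t (Suc i)}. s x = \<alpha> * sin (lam * x) + \<beta> * cos (lam * x)"
        using \<open>i \<in> {1..<n}\<close> \<open>\<forall>i\<in>{1..<n}. _\<close> by blast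
      have "continuous_on {t i..t (Suc i)} (\<lambda>x. \<alpha> * sin (lam * x) + \<beta> * cos (lam * x))"
        by (intro continuous_intros)
      then show ?thesis by (rule continuous_on_eq) (use s_eq in auto)
    qed
    then show ?thesis
      by (subst is_partition_Union[OF partition]) (rule continuous_on_closed_Union; auto)
  qed
  then show ?thesis unfolding trig_spline_space_def by blast
qed

lemma spline_continuous: "s \<in> trig_spline_space lam n t \<Longrightarrow> continuous_on {0..pi/lam} s"
  unfolding trig_spline_space_def by blast

lemma spline_zero: "(\<lambda>x. 0) \<in> trig_spline_space lam n t"
  unfolding trig_spline_space_iff by (auto intro!: exI[of _ 0])

lemma spline_lincomb:
  assumes "v \<in> trig_spline_space lam n t" "w \<in> trig_spline_space lam n t"
  shows "(\<lambda>x. c * v x + d * w x) \<in> trig_spline_space lam n t"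
  unfolding trig_spline_space_iff
proof
  fix i assume i: "i \<in> {1..<n}"
  obtain \<alpha>1 \<beta>1 \<alpha>2 \<beta>2 where
    "\<forall>x\<in>{t i..t (Suc i)}. v x = \<alpha>1 * sin (lam * x) + \<beta>1 * cos (lam * x)"
    "\<forall>x\<in>{t i..t (Suc i)}. w x = \<alpha>2 * sin (lam * x) + \<beta>2 * cos (lam * x)"
    using assms i unfolding trig_spline_space_iff by meson
  then show "\<exists>\<alpha> \<beta>. \<forall>x\<in>{t i..t (Suc i)}. c * v x + d * w x = \<alpha> * sin (lam * x) + \<beta> * cos (lam * x)"
    by (intro exI[of _ "c * \<alpha>1 + d * \<alpha>2"] exI[of _ "c * \<beta>1 + d * \<beta>2"]) (simp add: algebra_simps)
qed

lemma spline_interpolation: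
  assumes "s \<in> trig_spline_space lam n t" "i \<in> {1..<n}" "x \<in> {t i..t (Suc i)}"
  shows "s x * sin (lam * (t (Suc i) - t i))
    = s (t i) * sin (lam * (t (Suc i) - x)) + s (t (Suc i)) * sin (lam * (x - t i))"
proof -
  obtain \<alpha> \<beta> where s: "\<forall>y\<in>{t i..t (Suc i)}. s y = \<alpha> * sin (lam * y) + \<beta> * cos (lam * y)"
    using assms(1,2) unfolding trig_spline_space_iff by blast
  have "t i \<in> {t i..t (Suc i)}" "t (Suc i) \<in> {t i..t (Suc i)}"
    using segment_less[OF assms(2)] by auto
  then show ?thesis
    using s assms(3) by (simp only:) (rule sin_cos_comb_interpolation)
qed

text \<open>The nodal basis: \<open>hat k (t i)\<close> is \<open>1\<close> for \<open>i = k\<close> and \<open>0\<close> otherwise.\<close>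

definition hat :: "nat \<Rightarrow> real \<Rightarrow> real" where
  "hat k x =
    (if 1 < k \<and> x \<in> {t (k - 1)..t k} then sin (lam * (x - t (k - 1))) / sin (lam * (t k - t (k - 1)))
     else if k < n \<and> x \<in> {t k..t (Suc k)} then sin (lam * (t (Suc k) - x)) / sin (lam * (t (Suc k) - t k))
     else 0)"

lemma hat_rising:
  assumes "i \<in> {1..<n}" "x \<in> {t i..t (Suc i)}"
  shows "hat (Suc i) x = sin (lam * (x - t i)) / sin (lam * (t (Suc i) - t i))"
  using assms by (simp add: hat_def)

lemma hat_falling:
  assumes "i \<in> {1..<n}" "x \<in> {t i..t (Suc i)}"
  shows "hat i x = sin (lam * (t (Suc i) - x)) / sin (lam * (t (Suc i) - t i))"
proof (cases "1 < i \<and> x \<in> {t (i - 1)..t i}")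
  case True
  then have "x = t i" using assms(2) by auto
  moreover have "i - 1 \<in> {1..<n}" "Suc (i - 1) = i"
    using True assms(1) by auto
  then have "sin (lam * (t i - t (i - 1))) \<noteq> 0"
    using sin_segment_pos[of "i - 1"] by simp
  ultimately show ?thesis
    using True sin_segment_pos[OF assms(1)] by (simp add: hat_def)
next
  case False
  then show ?thesis using assms by (auto simp: hat_def)
qed

lemma hat_eq_0:
  assumes "k \<in> {1..n}" "i \<in> {1..<n}" "k \<noteq> i" "k \<noteq> Suc i" "x \<in> {t i..t (Suc i)}"
  shows "hat k x = 0"
proof (cases "k < i")
  case True
  have "\<not> x \<le> t k"
    using is_partition_less[OF partition, of k i] True assms(1,2,5) by auto
  moreover have "x = t (Suc k)" if "x \<le> t (Suc k)"
    using is_partition_less[OF partition, of "Suc k" i] True assms that by (cases "Suc k = i") auto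
  ultimately show ?thesis by (auto simp: hat_def)
next
  case False
  then have "Suc i < k" using assms(3,4) by simp
  have "\<not> t k \<le> x"
    using is_partition_less[OF partition, of "Suc i" k] \<open>Suc i < k\<close> assms(1,2,5) by auto
  moreover have "x = t (k - 1)" if "t (k - 1) \<le> x"
  proof (cases "k - 1 = Suc i")
    case False
    then have "t (Suc i) < t (k - 1)"
      using is_partition_less[OF partition, of "Suc i" "k - 1"] \<open>Suc i < k\<close> assms(1) by auto
    then show ?thesis using that assms(5) by auto
  qed (use that assms(5) in auto)
  ultimately show ?thesis by (auto simp: hat_def)
qed

lemma hat_nonneg:
  assumes "k \<in> {1..n}"
  shows "0 \<le> hat k x"
proof -
  have sin_nonneg: "0 \<le> sin (lam * d) / sin (lam * (t (Suc i) - t i))"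
    if "i \<in> {1..<n}" "0 \<le> d" "d \<le> t (Suc i) - t i" for i d
  proof -
    have "lam * d \<le> lam * (t (Suc i) - t i)"
      using that lam_pos by (intro mult_left_mono) auto
    then have "lam * d \<le> pi" using short_segments[OF that(1)] by linarith
    then show ?thesis
      using that sin_segment_pos[OF that(1)] lam_pos by (auto intro!: divide_nonneg_pos sin_ge_zero)
  qed
  show ?thesis
  proof (cases "1 < k \<and> x \<in> {t (k - 1)..t k}")
    case True
    then have "k - 1 \<in> {1..<n}" "Suc (k - 1) = k" using assms by auto
    then show ?thesis
      using True sin_nonneg[of "k - 1" "x - t (k - 1)"] by (simp add: hat_def)
  next
    case False
    then show ?thesis
      using assms sin_nonneg[of k "t (Suc k) - x"] by (auto simp: hat_def)
  qed
qed

lemma hat_in_space: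
  assumes "k \<in> {1..n}"
  shows "hat k \<in> trig_spline_space lam n t"
  unfolding trig_spline_space_iff
proof
  fix i assume i: "i \<in> {1..<n}"
  define S where "S = sin (lam * (t (Suc i) - t i))"
  consider "k = Suc i" | "k = i" | "k \<noteq> i" "k \<noteq> Suc i" by blast
  then show "\<exists>\<alpha> \<beta>. \<forall>x\<in>{t i..t (Suc i)}. hat k x = \<alpha> * sin (lam * x) + \<beta> * cos (lam * x)"
  proof cases
    case 1
    show ?thesis
      by (intro exI[of _ "cos (lam * t i) / S"] exI[of _ "- sin (lam * t i) / S"])
        (simp add: 1 hat_rising[OF i] S_def sin_diff diff_divide_distrib algebra_simps)
  next
    case 2
    show ?thesis
      by (intro exI[of _ "- cos (lam * t (Suc i)) / S"] exI[of _ "sin (lam * t (Suc i)) / S"])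
        (simp add: 2 hat_falling[OF i] S_def sin_diff diff_divide_distrib algebra_simps)
  next
    case 3
    then show ?thesis using hat_eq_0[OF assms i] by (intro exI[of _ 0]) simp
  qed
qed

lemma hat_continuous: "k \<in> {1..n} \<Longrightarrow> continuous_on {0..pi/lam} (hat k)"
  using hat_in_space spline_continuous by blast

lemma hat_at_knot:
  assumes "k \<in> {1..n}"
  shows "hat k (t k) = 1"
proof (cases "k < n")
  case True
  then have "k \<in> {1..<n}" using assms by auto
  then show ?thesis
    using hat_falling[of k "t k"] segment_less sin_segment_pos[of k] by fastforce
next
  case False
  then have "n - 1 \<in> {1..<n}" "k = Suc (n - 1)"
    using assms partition unfolding is_partition_def by auto
  then show ?thesis
    using hat_rising[of "n - 1" "t k"] segment_less sin_segment_pos[of "n - 1"] by fastforce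
qed

lemma integral_hat_pos:
  assumes "k \<in> {1..n}"
  shows "0 < integral {0..pi/lam} (hat k)"
  using assms lam_pos is_partition_range[OF partition, of k] hat_at_knot[OF assms]
  by (intro integral_pos_if_continuous_nonneg[of _ _ _ "t k"] hat_continuous hat_nonneg) auto

lemma spline_eq_sum_hat:
  assumes "s \<in> trig_spline_space lam n t" "x \<in> {0..pi/lam}"
  shows "s x = (\<Sum>k\<in>{1..n}. s (t k) * hat k x)"
proof -
  obtain i where i: "i \<in> {1..<n}" "x \<in> {t i..t (Suc i)}"
    using is_partition_cover[OF partition assms(2)] by blast
  have "(\<Sum>k\<in>{1..n}. s (t k) * hat k x) = (\<Sum>k\<in>{i, Suc i}. s (t k) * hat k x)"
    using i hat_eq_0[OF _ i(1) _ _ i(2)] by (intro sum.mono_neutral_right) auto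
  also have "\<dots> = (s (t i) * sin (lam * (t (Suc i) - x)) + s (t (Suc i)) * sin (lam * (x - t i)))
      / sin (lam * (t (Suc i) - t i))"
    using i by (simp add: hat_rising hat_falling add_divide_distrib)
  also have "\<dots> = s x"
    using spline_interpolation[OF assms(1) i] sin_segment_pos[OF i(1)] by (simp add: divide_eq_eq)
  finally show ?thesis ..
qed

lemma spline_proj_exists:
  assumes f: "continuous_on {0..pi/lam} f"
  shows "\<exists>p. p \<in> trig_spline_space lam n t \<and>
    (\<forall>s\<in>trig_spline_space lam n t. L2_inner lam f s = L2_inner lam p s)"
proof -
  have "\<exists>p\<in>trig_spline_space lam n t. L2_projection_onto 0 (pi/lam) (map hat [1..<Suc n]) f p"
  proof (rule L2_projection_onto_exists)
    show "0 < pi/lam" using lam_pos by simp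
    show "set (map hat [1..<Suc n]) \<subseteq> trig_spline_space lam n t" using hat_in_space by auto
  qed (use f spline_continuous spline_zero spline_lincomb in auto)
  then obtain p where p: "p \<in> trig_spline_space lam n t"
    and "L2_projection_onto 0 (pi/lam) (map hat [1..<Suc n]) f p" by blast
  then have orth: "\<forall>g\<in>set (map hat [1..<Suc n]). L2_inner_on 0 (pi/lam) (\<lambda>x. f x - p x) g = 0"
    unfolding L2_projection_onto_def by blast
  have "L2_inner lam f s = L2_inner lam p s" if s: "s \<in> trig_spline_space lam n t" for s
  proof -
    have cont: "continuous_on {0..pi/lam} (\<lambda>x. f x - p x)"
      using f spline_continuous[OF p] by (intro continuous_intros)
    have "L2_inner_on 0 (pi/lam) (\<lambda>x. f x - p x) s
        = L2_inner_on 0 (pi/lam) (\<lambda>x. f x - p x) (\<lambda>x. \<Sum>k\<in>{1..n}. s (t k) * hat k x)"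
      using spline_eq_sum_hat[OF s] by (intro L2_inner_on_cong) auto
    also have "\<dots> = (\<Sum>k\<in>{1..n}. integral {0..pi/lam} (\<lambda>x. s (t k) * ((f x - p x) * hat k x)))"
    proof -
      have "(\<lambda>x. s (t k) * ((f x - p x) * hat k x)) integrable_on {0..pi/lam}" if "k \<in> {1..n}" for k
        using f spline_continuous[OF p] hat_continuous[OF that]
        by (intro integrable_continuous_interval continuous_intros)
      then show ?thesis
        unfolding L2_inner_on_def sum_distrib_left by (subst integral_sum[symmetric]) (simp_all add: mult_ac)
    qed
    also have "\<dots> = (\<Sum>k\<in>{1..n}. s (t k) * L2_inner_on 0 (pi/lam) (\<lambda>x. f x - p x) (hat k))"
      by (simp add: L2_inner_on_def)
    also have "\<dots> = 0"
      using orth by (intro sum.neutral) auto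
    finally show ?thesis
      using f spline_continuous[OF p] spline_continuous[OF s]
      by (simp add: L2_inner_eq_L2_inner_on L2_inner_on_diff_left)
  qed
  then show ?thesis using p by blast
qed

lemma spline_proj_in_space:
  "continuous_on {0..pi/lam} f \<Longrightarrow> spline_proj lam n t f \<in> trig_spline_space lam n t"
  using someI_ex[OF spline_proj_exists] unfolding spline_proj_def by blast

lemma spline_proj_orthogonal:
  "continuous_on {0..pi/lam} f \<Longrightarrow> s \<in> trig_spline_space lam n t
    \<Longrightarrow> L2_inner lam f s = L2_inner lam (spline_proj lam n t f) s"
  using someI_ex[OF spline_proj_exists] unfolding spline_proj_def by blast

lemma spline_proj_L2_le:
  assumes f: "continuous_on {0..pi/lam} f"
  shows "L2_inner_on 0 (pi/lam) (spline_proj lam n t f) (spline_proj lam n t f) \<le> (sup_norm lam f)\<^sup>2 * (pi/lam)"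
proof -
  have p: "spline_proj lam n t f \<in> trig_spline_space lam n t"
    using spline_proj_in_space[OF f] .
  have "L2_inner_on 0 (pi/lam) (spline_proj lam n t f) (spline_proj lam n t f) \<le> L2_inner_on 0 (pi/lam) f f"
    using spline_proj_orthogonal[OF f p] f spline_continuous[OF p]
    by (intro L2_inner_on_projection_le) (simp_all add: L2_inner_eq_L2_inner_on)
  also have "\<dots> \<le> (sup_norm lam f)\<^sup>2 * (pi/lam - 0)"
    using lam_pos f sup_norm_ge[OF f] by (intro L2_inner_on_self_le) auto
  finally show ?thesis by simp
qed

lemma spline_segment_test:
  assumes s: "s \<in> trig_spline_space lam n t" and i: "i \<in> {1..<n}"
    and short: "lam * (t (Suc i) - t i) \<le> 1" and k: "k \<in> {i, Suc i}"
    and dominant: "\<bar>s (t i)\<bar> \<le> \<bar>s (t k)\<bar>" "\<bar>s (t (Suc i))\<bar> \<le> \<bar>s (t k)\<bar>"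
  shows "\<bar>s (t k)\<bar> / 8 * integral {t i..t (Suc i)} (hat k)
    \<le> sgn (s (t k)) * integral {t i..t (Suc i)} (\<lambda>x. s x * hat k x)"
proof -
  define S where "S = sin (lam * (t (Suc i) - t i))"
  have S: "0 < S" unfolding S_def using sin_segment_pos[OF i] .
  define w where "w x = (if k = i then sin (lam * (t (Suc i) - x)) else sin (lam * (x - t i)))" for x
  have hat_w: "hat k x = w x / S" if "x \<in> {t i..t (Suc i)}" for x
    using k hat_falling[OF i that] hat_rising[OF i that] by (auto simp: w_def S_def)
  have "\<bar>s (t k)\<bar> / 8 * integral {t i..t (Suc i)} w \<le> sgn (s (t k)) * integral {t i..t (Suc i)} (\<lambda>x. s x * w x)"
  proof (cases "k = i")
    case True
    then show ?thesis
      using segment_test_falling[OF lam_pos segment_less[OF i] short spline_interpolation[OF s i]]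
        dominant by (simp add: w_def[abs_def])
  next
    case False
    then show ?thesis
      using segment_test_rising[OF lam_pos segment_less[OF i] short spline_interpolation[OF s i]]
        dominant k by (simp add: w_def[abs_def])
  qed
  then have "\<bar>s (t k)\<bar> / 8 * integral {t i..t (Suc i)} w / S
      \<le> sgn (s (t k)) * integral {t i..t (Suc i)} (\<lambda>x. s x * w x) / S"
    using S by (intro divide_right_mono) auto
  moreover have "integral {t i..t (Suc i)} (hat k) = integral {t i..t (Suc i)} (\<lambda>x. w x / S)"
    "integral {t i..t (Suc i)} (\<lambda>x. s x * hat k x) = integral {t i..t (Suc i)} (\<lambda>x. s x * w x / S)"
    by (rule integral_cong, simp add: hat_w)+
  ultimately show ?thesis by simp
qed

lemma spline_hat_test:
  assumes s: "s \<in> trig_spline_space lam n t" and k: "k \<in> {1..n}"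
    and short: "\<And>i. i \<in> {1..<n} \<Longrightarrow> k \<in> {i, Suc i} \<Longrightarrow> lam * (t (Suc i) - t i) \<le> 1"
    and max: "\<And>i. i \<in> {1..n} \<Longrightarrow> \<bar>s (t i)\<bar> \<le> \<bar>s (t k)\<bar>"
  shows "\<bar>s (t k)\<bar> / 8 * integral {0..pi/lam} (hat k) \<le> sgn (s (t k)) * L2_inner lam s (hat k)"
proof -
  have cont [continuous_intros]: "continuous_on {0..pi/lam} s" "continuous_on {0..pi/lam} (hat k)"
    using spline_continuous[OF s] hat_continuous[OF k] by auto
  have segment: "\<bar>s (t k)\<bar> / 8 * integral {t i..t (Suc i)} (hat k)
      \<le> sgn (s (t k)) * integral {t i..t (Suc i)} (\<lambda>x. s x * hat k x)" if i: "i \<in> {1..<n}" for i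
  proof (cases "k \<in> {i, Suc i}")
    case True
    then show ?thesis
      using spline_segment_test[OF s i short[OF i True] True] max i by auto
  next
    case False
    have "integral {t i..t (Suc i)} (hat k) = integral {t i..t (Suc i)} (\<lambda>x. 0)"
      "integral {t i..t (Suc i)} (\<lambda>x. s x * hat k x) = integral {t i..t (Suc i)} (\<lambda>x. 0)"
      by (rule integral_cong, use False hat_eq_0[OF k i] in force)+
    then show ?thesis by simp
  qed
  have "\<bar>s (t k)\<bar> / 8 * integral {0..pi/lam} (hat k)
      = (\<Sum>i\<in>{1..<n}. \<bar>s (t k)\<bar> / 8 * integral {t i..t (Suc i)} (hat k))"
    by (simp add: integral_is_partition_sum[OF partition cont(2)] sum_distrib_left)
  also have "\<dots> \<le> (\<Sum>i\<in>{1..<n}. sgn (s (t k)) * integral {t i..t (Suc i)} (\<lambda>x. s x * hat k x))"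
    using segment by (rule sum_mono)
  also have "\<dots> = sgn (s (t k)) * L2_inner lam s (hat k)"
  proof -
    have "continuous_on {0..pi/lam} (\<lambda>x. s x * hat k x)"
      by (intro continuous_intros)
    then show ?thesis by (simp add: L2_inner_def integral_is_partition_sum[OF partition] sum_distrib_left)
  qed
  finally show ?thesis .
qed

lemma spline_proj_knot_bound:
  fixes f :: "real \<Rightarrow> real"
  defines "p \<equiv> spline_proj lam n t f"
  assumes f: "continuous_on {0..pi/lam} f" and k: "k \<in> {1..n}"
    and short: "\<And>i. i \<in> {1..<n} \<Longrightarrow> k \<in> {i, Suc i} \<Longrightarrow> lam * (t (Suc i) - t i) \<le> 1"
    and max: "\<And>i. i \<in> {1..n} \<Longrightarrow> \<bar>p (t i)\<bar> \<le> \<bar>p (t k)\<bar>"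
  shows "\<bar>p (t k)\<bar> \<le> 8 * sup_norm lam f"
proof -
  define M where "M = sup_norm lam f"
  have p: "p \<in> trig_spline_space lam n t"
    unfolding p_def using spline_proj_in_space[OF f] .
  have "\<bar>p (t k)\<bar> / 8 * integral {0..pi/lam} (hat k) \<le> sgn (p (t k)) * L2_inner lam p (hat k)"
    using spline_hat_test[OF p k short max] by blast
  also have "\<dots> = sgn (p (t k)) * L2_inner_on 0 (pi/lam) f (hat k)"
    using spline_proj_orthogonal[OF f hat_in_space[OF k]] by (simp add: p_def L2_inner_eq_L2_inner_on)
  also have "\<dots> \<le> \<bar>L2_inner_on 0 (pi/lam) f (hat k)\<bar>"
    by (auto simp: sgn_if)
  also have "\<dots> \<le> M * integral {0..pi/lam} (hat k)"
    unfolding M_def using f sup_norm_ge[OF f] hat_nonneg[OF k] hat_continuous[OF k]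
    by (intro L2_inner_on_abs_le) auto
  finally show ?thesis
    using integral_hat_pos[OF k] unfolding M_def by simp
qed

end

section \<open>Partitions with one long segment\<close>

locale long_segment_partition =
  fixes lam :: real and n :: nat and t :: "nat \<Rightarrow> real" and j :: nat and eps :: real
  assumes lam_pos: "0 < lam"
    and partition: "is_partition (pi/lam) n t"
    and long_segment: "j \<in> {1..<n}" "t (Suc j) - t j = pi/lam - eps"
    and eps_pos: "0 < eps" and lam_eps: "lam * eps \<le> 1/10"
begin

lemma other_segments_short:
  assumes i: "i \<in> {1..<n}" "i \<noteq> j"
  shows "lam * (t (Suc i) - t i) \<le> 1/10"
proof -
  have "t (Suc i) - t i \<le> eps"
  proof (cases "i < j")
    case True
    then show ?thesis
      using is_partition_le[OF partition, of "Suc i" j] is_partition_range[OF partition, of i]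
        is_partition_range[OF partition, of "Suc j"] long_segment i by auto
  next
    case False
    then show ?thesis
      using is_partition_le[OF partition, of "Suc j" i] is_partition_range[OF partition, of j]
        is_partition_range[OF partition, of "Suc i"] long_segment i by auto
  qed
  then show ?thesis
    using lam_pos lam_eps mult_left_mono[of "t (Suc i) - t i" eps lam] by linarith
qed

sublocale trig_partition
proof
  fix i assume i: "i \<in> {1..<n}"
  show "lam * (t (Suc i) - t i) < pi"
  proof (cases "i = j")
    case True
    then show ?thesis using long_segment lam_pos eps_pos by (simp add: right_diff_distrib)
  next
    case False
    then show ?thesis using other_segments_short[OF i] pi_gt3 by linarith
  qed
qed (use lam_pos partition in auto)

lemma long_segment_coefficients_bound:
  assumes f: "continuous_on {0..pi/lam} f"
    and p_eq: "\<forall>y\<in>{t j..t (Suc j)}. spline_proj lam n t f y = \<alpha> * sin (lam * y) + \<beta> * cos (lam * y)"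
  shows "\<alpha>\<^sup>2 + \<beta>\<^sup>2 \<le> 2 * pi * (sup_norm lam f)\<^sup>2"
proof -
  define p where "p = spline_proj lam n t f"
  have p_cont: "continuous_on {0..pi/lam} p"
    unfolding p_def using spline_continuous[OF spline_proj_in_space[OF f]] .
  have sub: "{t j..t (Suc j)} \<subseteq> {0..pi/lam}"
    using is_partition_range[OF partition, of j] is_partition_range[OF partition, of "Suc j"] long_segment(1)
    by auto
  have "1 / (2 * lam) \<le> (t (Suc j) - t j) / 2 - 1 / (2 * lam)"
    using long_segment(2) lam_eps lam_pos pi_gt3 by (simp add: field_simps)
  then have "(\<alpha>\<^sup>2 + \<beta>\<^sup>2) * (1 / (2 * lam))
      \<le> (\<alpha>\<^sup>2 + \<beta>\<^sup>2) * ((t (Suc j) - t j) / 2 - 1 / (2 * lam))"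
    by (intro mult_left_mono) auto
  also have "\<dots> \<le> integral {t j..t (Suc j)} (\<lambda>y. (\<alpha> * sin (lam * y) + \<beta> * cos (lam * y))\<^sup>2)"
    using lam_pos segment_less[OF long_segment(1)] by (intro integral_sin_cos_comb_sq_ge) auto
  also have "\<dots> = integral {t j..t (Suc j)} (\<lambda>y. p y * p y)"
    using p_eq unfolding p_def by (intro integral_cong) (simp add: power2_eq_square)
  also have "\<dots> \<le> L2_inner_on 0 (pi/lam) p p"
    unfolding L2_inner_on_def using sub
    by (intro integral_subset_le integrable_continuous_interval continuous_intros
        continuous_on_subset[OF p_cont sub] p_cont) auto
  also have "\<dots> \<le> (sup_norm lam f)\<^sup>2 * (pi/lam)"
    using spline_proj_L2_le[OF f] unfolding p_def .
  also have "\<dots> = (2 * pi * (sup_norm lam f)\<^sup>2) * (1 / (2 * lam))"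
    by simp
  finally show ?thesis
    using lam_pos by (subst (asm) mult_le_cancel_right_pos) auto
qed

lemma spline_proj_bound_on_long_segment:
  assumes f: "continuous_on {0..pi/lam} f" and x: "x \<in> {t j..t (Suc j)}"
  shows "\<bar>spline_proj lam n t f x\<bar> \<le> 3 * sup_norm lam f"
proof -
  define M where "M = sup_norm lam f"
  have M: "0 \<le> M" unfolding M_def using lam_pos f by (intro sup_norm_nonneg) auto
  obtain \<alpha> \<beta> where p_eq:
    "\<forall>y\<in>{t j..t (Suc j)}. spline_proj lam n t f y = \<alpha> * sin (lam * y) + \<beta> * cos (lam * y)"
    using spline_proj_in_space[OF f] long_segment(1) unfolding trig_spline_space_iff by blast
  have "(spline_proj lam n t f x)\<^sup>2 \<le> \<alpha>\<^sup>2 + \<beta>\<^sup>2"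
    using p_eq x sin_cos_comb_sq_le by simp
  also have "\<dots> \<le> 2 * pi * M\<^sup>2"
    unfolding M_def by (rule long_segment_coefficients_bound[OF f p_eq])
  also have "\<dots> \<le> (3 * M)\<^sup>2"
    using pi_less_4 by (simp add: power_mult_distrib mult_right_mono)
  finally have "\<bar>spline_proj lam n t f x\<bar>\<^sup>2 \<le> (3 * M)\<^sup>2" by simp
  then show ?thesis
    unfolding M_def[symmetric] by (rule power2_le_imp_le) (use M in simp)
qed

lemma spline_proj_knot_values_bound:
  assumes f: "continuous_on {0..pi/lam} f" and i: "i \<in> {1..n}"
  shows "\<bar>spline_proj lam n t f (t i)\<bar> \<le> 8 * sup_norm lam f"
proof -
  define p where "p = spline_proj lam n t f"
  have "Max ((\<lambda>i. \<bar>p (t i)\<bar>) ` {1..n}) \<in> (\<lambda>i. \<bar>p (t i)\<bar>) ` {1..n}"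
    using i by (intro Max_in) auto
  then obtain k where k: "Max ((\<lambda>i. \<bar>p (t i)\<bar>) ` {1..n}) = \<bar>p (t k)\<bar>" "k \<in> {1..n}"
    by (rule imageE)
  have max: "\<bar>p (t i)\<bar> \<le> \<bar>p (t k)\<bar>" if "i \<in> {1..n}" for i
    unfolding k(1)[symmetric] using that by (intro Max_ge) auto
  have "\<bar>p (t k)\<bar> \<le> 8 * sup_norm lam f"
  proof (cases "k \<in> {j, Suc j}")
    case True
    then have "t k \<in> {t j..t (Suc j)}" using segment_less[OF long_segment(1)] by auto
    then have "\<bar>p (t k)\<bar> \<le> 3 * sup_norm lam f"
      unfolding p_def by (rule spline_proj_bound_on_long_segment[OF f])
    then show ?thesis
      using sup_norm_nonneg[of lam f] lam_pos f by linarith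
  next
    case False
    have "lam * (t (Suc i) - t i) \<le> 1" if "i \<in> {1..<n}" "k \<in> {i, Suc i}" for i
    proof -
      have "i \<noteq> j" using that(2) False by auto
      then show ?thesis using other_segments_short[OF that(1)] by linarith
    qed
    then show ?thesis
      using max unfolding p_def by (rule spline_proj_knot_bound[OF f k(2)])
  qed
  then show ?thesis using max[OF i] unfolding p_def by linarith
qed

end

theorem mainTheorem4:
  fixes lam :: real
  assumes "lam > 0"
  shows "\<exists>C \<epsilon>0. \<epsilon>0 > 0 \<and>
    (\<forall>n t j \<epsilon> f. is_partition (pi/lam) n t \<and> j \<in> {1..<n} \<and> \<epsilon> > 0 \<and> \<epsilon> < \<epsilon>0 \<and>
        t (Suc j) - t j = pi/lam - \<epsilon> \<and> continuous_on {0..pi/lam} f \<longrightarrow>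
        (\<forall>i\<in>{1..n}. \<bar>spline_proj lam n t f (t i)\<bar> \<le> (38/pi + C * \<epsilon>) * sup_norm lam f))"
proof (rule exI[of _ 0], rule exI[of _ "1 / (10 * lam)"], intro conjI allI impI ballI)
  show "0 < 1 / (10 * lam)" using assms by simp
  fix n t j \<epsilon> and f :: "real \<Rightarrow> real" and i
  assume H: "is_partition (pi/lam) n t \<and> j \<in> {1..<n} \<and> \<epsilon> > 0 \<and> \<epsilon> < 1 / (10 * lam) \<and>
      t (Suc j) - t j = pi/lam - \<epsilon> \<and> continuous_on {0..pi/lam} f" and i: "i \<in> {1..n}"
  have "lam * \<epsilon> \<le> 1/10"
    using H assms by (simp add: field_simps)
  then interpret long_segment_partition lam n t j \<epsilon>
    using H assms by unfold_locales auto
  have "\<bar>spline_proj lam n t f (t i)\<bar> \<le> 8 * sup_norm lam f"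
    using H i by (intro spline_proj_knot_values_bound) auto
  also have "\<dots> \<le> 38/pi * sup_norm lam f"
  proof (rule mult_right_mono)
    show "8 \<le> 38 / pi" using pi_less_4 pi_gt_zero by (simp add: le_divide_eq)
    show "0 \<le> sup_norm lam f" using sup_norm_nonneg[of lam f] assms H by simp
  qed
  finally show "\<bar>spline_proj lam n t f (t i)\<bar> \<le> (38/pi + 0 * \<epsilon>) * sup_norm lam f" by simp
qed

end
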